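(* Let $Q$ be a Moufang loop, $S\le Q$, and $x,y\in Q$. Then $x^{-1}(xS\cap yS)=y^{-1}(xS\cap yS)$.
   Context: A Moufang loop is a loop satisfying $((xy)x)z=x(y(xz))$; such loops have two-sided inverses $x^{-1}$ and the inverse property. For a set $A$, $xA=\{xa:a\in A\}$. *)

theory Defs
  imports Main
begin

definition loop :: "('a \<Rightarrow> 'a \<Rightarrow> 'a) \<Rightarrow> 'a \<Rightarrow> bool" where
  "loop m e \<longleftrightarrow> (\<forall>x. m e x = x \<and> m x e = x)
     \<and> (\<forall>a b. \<exists>!x. m a x = b) \<and> (\<forall>a b. \<exists>!y. m y a = b)"

definition moufang_loop :: "('a \<Rightarrow> 'a \<Rightarrow> 'a) \<Rightarrow> 'a \<Rightarrow> bool" where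
  "moufang_loop m e \<longleftrightarrow> loop m e
     \<and> (\<forall>x y z. m (m (m x y) x) z = m x (m y (m x z)))"

text \<open>Inverse: the unique right inverse (two-sided in a Moufang loop).\<close>
definition loop_inv :: "('a \<Rightarrow> 'a \<Rightarrow> 'a) \<Rightarrow> 'a \<Rightarrow> 'a \<Rightarrow> 'a" where
  "loop_inv m e x = (THE y. m x y = e)"

definition subloop :: "('a \<Rightarrow> 'a \<Rightarrow> 'a) \<Rightarrow> 'a set \<Rightarrow> bool" where
  "subloop m S \<longleftrightarrow> S \<noteq> {} \<and> (\<forall>a\<in>S. \<forall>b\<in>S. m a b \<in> S
     \<and> (\<forall>c. m a c = b \<longrightarrow> c \<in> S) \<and> (\<forall>c. m c a = b \<longrightarrow> c \<in> S))"

definition lmult_set :: "('a \<Rightarrow> 'a \<Rightarrow> 'a) \<Rightarrow> 'a \<Rightarrow> 'a set \<Rightarrow> 'a set" where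
  "lmult_set m x A = (\<lambda>a. m x a) ` A"

end

theory Submission
  imports Defs
begin

text \<open>Inside \<open>xS\<close>, left multiplication by \<open>x\<^sup>-\<^sup>1\<close> recovers the \<open>S\<close>-coordinate (left inverse
  property), so \<open>x\<^sup>-\<^sup>1(xS \<inter> yS) = {s \<in> S. xs \<in> yS}\<close>. This set is symmetric in \<open>x\<close> and \<open>y\<close>:
  if \<open>xs = yt\<close> with \<open>s, t \<in> S\<close>, then writing \<open>w = xs\<close> we have \<open>x = ws\<^sup>-\<^sup>1\<close> and \<open>y = wt\<^sup>-\<^sup>1\<close>,
  and the right Moufang identity gives \<open>x(s(t\<^sup>-\<^sup>1s)) = (((ws\<^sup>-\<^sup>1)s)t\<^sup>-\<^sup>1)s = ys\<close>, with
  \<open>s(t\<^sup>-\<^sup>1s) \<in> S\<close>.\<close>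

locale moufang =
  fixes m :: "'a \<Rightarrow> 'a \<Rightarrow> 'a" (infixl "\<cdot>" 70) and e :: 'a
  assumes moufang_loop: "moufang_loop m e"
begin

abbreviation inv :: "'a \<Rightarrow> 'a" where "inv \<equiv> loop_inv m e"

lemma left_unit [simp]: "e \<cdot> x = x"
  and right_unit [simp]: "x \<cdot> e = x"
  using moufang_loop unfolding moufang_loop_def loop_def by blast+

lemma left_moufang: "((x \<cdot> y) \<cdot> x) \<cdot> z = x \<cdot> (y \<cdot> (x \<cdot> z))"
  using moufang_loop unfolding moufang_loop_def by blast

lemma left_cancel: "a \<cdot> b = a \<cdot> c \<Longrightarrow> b = c"
  using moufang_loop unfolding moufang_loop_def loop_def by metis

lemma left_solvable: "\<exists>y. a \<cdot> y = b"
  using moufang_loop unfolding moufang_loop_def loop_def by metis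

lemma right_inverse [simp]: "x \<cdot> inv x = e"
proof -
  have "\<exists>!y. x \<cdot> y = e" using moufang_loop unfolding moufang_loop_def loop_def by blast
  then show ?thesis unfolding loop_inv_def by (rule theI')
qed

lemma left_inverse_property [simp]: "inv x \<cdot> (x \<cdot> z) = z"
proof -
  have "x \<cdot> z = ((x \<cdot> inv x) \<cdot> x) \<cdot> z" by simp
  also have "\<dots> = x \<cdot> (inv x \<cdot> (x \<cdot> z))" by (rule left_moufang)
  finally show ?thesis by (metis left_cancel)
qed

lemma left_inverse [simp]: "inv x \<cdot> x = e"
  using left_inverse_property[of x e] by simp

lemma inverse_inverse [simp]: "inv (inv x) = x"
  using left_inverse[of x] right_inverse[of "inv x"] by (metis left_cancel)

lemma right_inverse_property [simp]: "(u \<cdot> x) \<cdot> inv x = u"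
proof -
  obtain y where y: "x \<cdot> y = u" using left_solvable by blast
  have "((x \<cdot> y) \<cdot> x) \<cdot> inv x = x \<cdot> (y \<cdot> (x \<cdot> inv x))" by (rule left_moufang)
  then show ?thesis by (simp add: y)
qed

lemma inverse_mult: "inv (a \<cdot> b) = inv b \<cdot> inv a"
proof -
  define c where "c = inv (a \<cdot> b)"
  have "inv c = ((a \<cdot> b) \<cdot> c) \<cdot> inv c" by (simp add: c_def)
  then have inv_c: "inv c = a \<cdot> b" by simp
  have "b = inv a \<cdot> inv c" by (simp add: inv_c)
  then have "b \<cdot> c = inv a" using right_inverse_property[of "inv a" "inv c"] by simp
  then have "c = inv b \<cdot> inv a" by (metis left_inverse_property)
  then show ?thesis unfolding c_def .
qed

text \<open>The mirror identity, obtained by inverting the left Moufang identity.\<close>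

lemma right_moufang: "((c \<cdot> a) \<cdot> b) \<cdot> a = c \<cdot> (a \<cdot> (b \<cdot> a))"
proof -
  have "inv (((inv a \<cdot> inv b) \<cdot> inv a) \<cdot> inv c) = inv (inv a \<cdot> (inv b \<cdot> (inv a \<cdot> inv c)))"
    by (simp add: left_moufang)
  then show ?thesis by (simp add: inverse_mult)
qed

lemma subloop_mult: "subloop m S \<Longrightarrow> a \<in> S \<Longrightarrow> b \<in> S \<Longrightarrow> a \<cdot> b \<in> S"
  unfolding subloop_def by blast

lemma subloop_unit: "subloop m S \<Longrightarrow> e \<in> S"
  unfolding subloop_def by (metis all_not_in_conv right_unit)

lemma subloop_inverse: "subloop m S \<Longrightarrow> a \<in> S \<Longrightarrow> inv a \<in> S"
  using subloop_unit[of S] unfolding subloop_def by (metis right_inverse)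

lemma inverse_lmult_set_Int:
  "lmult_set m (inv x) (lmult_set m x S \<inter> B) = {s \<in> S. x \<cdot> s \<in> B}"
  unfolding lmult_set_def by force

lemma mult_eq_imp_swapped:
  assumes "x \<cdot> s = y \<cdot> t"
  shows "y \<cdot> s = x \<cdot> (s \<cdot> (inv t \<cdot> s))"
proof -
  define w where "w = x \<cdot> s"
  have x: "x = w \<cdot> inv s" by (simp add: w_def)
  have y: "y = w \<cdot> inv t" by (simp add: w_def assms)
  have "x \<cdot> (s \<cdot> (inv t \<cdot> s)) = (((w \<cdot> inv s) \<cdot> s) \<cdot> inv t) \<cdot> s"
    unfolding x by (rule right_moufang[symmetric])
  also have "(w \<cdot> inv s) \<cdot> s = w"
    using right_inverse_property[of w "inv s"] by simp
  finally show ?thesis by (simp add: y)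
qed

lemma subloop_coset_Int_subset:
  assumes "subloop m S"
  shows "{s \<in> S. x \<cdot> s \<in> lmult_set m y S} \<subseteq> {s \<in> S. y \<cdot> s \<in> lmult_set m x S}"
proof safe
  fix s assume s: "s \<in> S" and "x \<cdot> s \<in> lmult_set m y S"
  then obtain t where t: "t \<in> S" and "x \<cdot> s = y \<cdot> t" unfolding lmult_set_def by blast
  from this(2) have "y \<cdot> s = x \<cdot> (s \<cdot> (inv t \<cdot> s))" by (rule mult_eq_imp_swapped)
  moreover have "s \<cdot> (inv t \<cdot> s) \<in> S"
    using assms s t by (simp add: subloop_mult subloop_inverse)
  ultimately show "y \<cdot> s \<in> lmult_set m x S" unfolding lmult_set_def by blast
qed

end

theorem lemma6p7:
  fixes m :: "'a \<Rightarrow> 'a \<Rightarrow> 'a" and e :: 'a and S :: "'a set" and x y :: 'a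
  assumes "moufang_loop m e" and "subloop m S"
  shows "lmult_set m (loop_inv m e x) (lmult_set m x S \<inter> lmult_set m y S)
       = lmult_set m (loop_inv m e y) (lmult_set m x S \<inter> lmult_set m y S)"
proof -
  interpret moufang m e by standard (fact assms(1))
  have "lmult_set m (inv y) (lmult_set m x S \<inter> lmult_set m y S)
      = lmult_set m (inv y) (lmult_set m y S \<inter> lmult_set m x S)"
    by (simp only: Int_commute)
  then show ?thesis
    using subloop_coset_Int_subset[OF assms(2), of x y] subloop_coset_Int_subset[OF assms(2), of y x]
    by (simp add: inverse_lmult_set_Int)
qed

end
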